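(* Let $(\bar\xi,\bar x)\in\operatorname{gph}E$ and $\rho>0$. Let $\xi\in\mathbb B(\bar\xi,\rho)$ and suppose that: (i) for every $z\in K(\xi)$ the function $x\mapsto f(\xi,x,z)$ is $C$-u.s.c.; (ii) there exists $x_{0,\xi}\in K(\xi)$ such that $f(\xi,x_{0,\xi},K(\xi))$ is $C$-bounded; (iii) there exists $\gamma>0$ such that $$\big[\partial_x\nu(\xi,x)+N^\flat(x;K(\xi))\big]\cap\gamma\mathbb B=\emptyset\quad\text{for all }x\in\mathbb R^n\setminus E(\xi).$$ Then $E(\xi)\neq\emptyset$ and $\operatorname{dist}(x,E(\xi))\le\mathfrak m(\xi,x)/\gamma$ for all $x\in\mathbb R^n$.
   Context: $C\subset\mathbb R^m$ nontrivial closed convex pointed cone; $K:\mathbb R^p\rightrightarrows\mathbb R^n$ has closed graph and nonempty values everywhere. VEP($\xi$): find $x\in K(\xi)$ with $f(\xi,x,z)\in C$ for all $z\in K(\xi)$; $E(\xi)$ its solution set. $\nu(\xi,x)=\sup_{z\in K(\xi)}\operatorname{dist}(f(\xi,x,z),C)$, $\mu(\xi,x)=\operatorname{dist}(x,K(\xi))$, $\mathfrak m=\nu+\mu$. A set $S\subseteq\mathbb R^m$ is $C$-bounded if $S\setminus C$ is bounded. $g$ is $C$-u.s.c. at $x_0$ if for every neighbourhood $V$ of $g(x_0)$ there is a neighbourhood $U$ of $x_0$ with $g(x)\in V-C$ on $U$. $\Pi(x;S)$ is the Euclidean projection set; basic normal cone $N(\bar x;S)=\operatorname{Limsup}_{x\to\bar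 x}\operatorname{cone}[x-\Pi(x;S)]$; basic subdifferential $\partial\psi(\bar x)=\{v:(v,-1)\in N((\bar x,\psi(\bar x));\operatorname{epi}\psi)\}$; $\partial_x\nu(\xi,x)$ is the basic subdifferential of $\nu(\xi,\cdot)$ at $x$. Unit truncation map: $N^\flat(x;K(\xi))=N(x;K(\xi))\cap\mathbb B$ if $x\in K(\xi)$, and $N^\flat(x;K(\xi))=\{(x-z)/\operatorname{dist}(x,K(\xi)):z\in\Pi(x;K(\xi))\}$ if $x\notin K(\xi)$. $\mathbb B$ is the closed unit ball. *)

theory Defs
  imports "HOL-Analysis.Analysis"
begin

definition proj_set :: "'a::euclidean_space \<Rightarrow> 'a set \<Rightarrow> 'a set" where
  "proj_set x S = {z \<in> S. dist x z = infdist x S}"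

definition cone_gen :: "'a::real_vector set \<Rightarrow> 'a set" where
  "cone_gen A = {t *\<^sub>R a | t a. 0 \<le> t \<and> a \<in> A}"

text \<open>Basic (limiting) normal cone: Painleve-Kuratowski outer limit of cone[x - Pi(x;S)] as x \<rightarrow> xbar.\<close>
definition basic_normal_cone :: "'a::euclidean_space \<Rightarrow> 'a set \<Rightarrow> 'a set" where
  "basic_normal_cone xbar S =
     {v. \<exists>xs vs. xs \<longlonglongrightarrow> xbar \<and> vs \<longlonglongrightarrow> v \<and>
          (\<forall>k. vs k \<in> cone_gen {xs k - z | z. z \<in> proj_set (xs k) S})}"

definition epi :: "('a \<Rightarrow> ereal) \<Rightarrow> ('a \<times> real) set" where
  "epi \<psi> = {(x, t). \<psi> x \<le> ereal t}"

definition basic_subdiff :: "('a::euclidean_space \<Rightarrow> ereal) \<Rightarrow> 'a \<Rightarrow> 'a set" where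
  "basic_subdiff \<psi> xbar =
     {v. \<bar>\<psi> xbar\<bar> \<noteq> \<infinity> \<and>
         (v, -1) \<in> basic_normal_cone (xbar, real_of_ereal (\<psi> xbar)) (epi \<psi>)}"

definition trunc_normal :: "'a::euclidean_space \<Rightarrow> 'a set \<Rightarrow> 'a set" where
  "trunc_normal x S =
     (if x \<in> S then basic_normal_cone x S \<inter> cball 0 1
      else {(x - z) /\<^sub>R infdist x S | z. z \<in> proj_set x S})"

definition pointed_cone :: "'a::real_vector set \<Rightarrow> bool" where
  "pointed_cone C \<longleftrightarrow> cone C \<and> C \<inter> uminus ` C = {0}"

definition C_bounded :: "'c::real_normed_vector set \<Rightarrow> 'c set \<Rightarrow> bool" where
  "C_bounded C S \<longleftrightarrow> bounded (S - C)"

definition C_usc_at :: "'c::real_normed_vector set \<Rightarrow> ('b::topological_space \<Rightarrow> 'c) \<Rightarrow> 'b \<Rightarrow> bool" where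
  "C_usc_at C g x0 \<longleftrightarrow>
     (\<forall>V. open V \<and> g x0 \<in> V \<longrightarrow>
        (\<exists>U. open U \<and> x0 \<in> U \<and> (\<forall>x\<in>U. g x \<in> {v - c | v c. v \<in> V \<and> c \<in> C})))"

definition VEP_sol :: "'c set \<Rightarrow> ('a \<Rightarrow> 'b set) \<Rightarrow> ('a \<Rightarrow> 'b \<Rightarrow> 'b \<Rightarrow> 'c) \<Rightarrow> 'a \<Rightarrow> 'b set" where
  "VEP_sol C K f \<xi> = {x \<in> K \<xi>. \<forall>z \<in> K \<xi>. f \<xi> x z \<in> C}"

definition gap_nu :: "'c::metric_space set \<Rightarrow> ('a \<Rightarrow> 'b set) \<Rightarrow> ('a \<Rightarrow> 'b \<Rightarrow> 'b \<Rightarrow> 'c) \<Rightarrow> 'a \<Rightarrow> 'b \<Rightarrow> ereal" where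
  "gap_nu C K f \<xi> x = (SUP z \<in> K \<xi>. ereal (infdist (f \<xi> x z) C))"

definition gap_mu :: "('a \<Rightarrow> 'b::metric_space set) \<Rightarrow> 'a \<Rightarrow> 'b \<Rightarrow> real" where
  "gap_mu K \<xi> x = infdist x (K \<xi>)"

definition gap_m :: "'c::metric_space set \<Rightarrow> ('a \<Rightarrow> 'b::metric_space set) \<Rightarrow> ('a \<Rightarrow> 'b \<Rightarrow> 'b \<Rightarrow> 'c) \<Rightarrow> 'a \<Rightarrow> 'b \<Rightarrow> ereal" where
  "gap_m C K f \<xi> x = gap_nu C K f \<xi> x + ereal (gap_mu K \<xi> x)"

end

theory Submission
  imports Defs
begin

text \<open>
  Fix \<open>0 < g < \<gamma>\<close> and a point \<open>x\<close>. The function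
  \<open>\<psi> = \<nu> + dist(\<cdot>, K) + g |\<cdot> - x|\<close> is lower semicontinuous (this is where \<open>C\<close>-upper
  semicontinuity of \<open>f\<close> enters; truncating \<open>\<nu>\<close> above \<open>\<nu> x\<close> makes it real-valued) and
  coercive, so it attains its minimum at some \<open>yb\<close>. If \<open>yb\<close> were not a solution,
  a fuzzy sum rule at \<open>yb\<close> would give a basic subgradient of \<open>\<nu>\<close> plus an element of
  \<open>N\<^sup>\<flat>(yb; K)\<close> of norm at most \<open>g < \<gamma>\<close>, contradicting the slope condition. The sum rule
  is obtained by giving each of the three terms its own variable, penalising the distance
  between the copies with weight \<open>k + 1\<close>, and passing to the limit of the proximal
  subgradients at exact minimisers of the penalised problems. Hence \<open>yb\<close> solves the problem
  and \<open>g dist(x, E) \<le> \<psi> yb \<le> \<psi> x = \<nu> x + dist(x, K)\<close>; letting \<open>g \<rightarrow> \<gamma>\<close> gives the error bound,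
  and \<open>C\<close>-boundedness at \<open>x0\<close> makes the right-hand side finite somewhere, so \<open>E \<noteq> {}\<close>.
\<close>

section \<open>Lower semicontinuity\<close>

definition lower_semicontinuous :: "('a::topological_space \<Rightarrow> 'b::linorder) \<Rightarrow> bool" where
  "lower_semicontinuous F \<longleftrightarrow> (\<forall>c. open {y. c < F y})"

lemma lower_semicontinuousI:
  assumes "\<And>y c. c < F y \<Longrightarrow> \<forall>\<^sub>F z in nhds y. c < F z"
  shows "lower_semicontinuous F"
  unfolding lower_semicontinuous_def open_subopen[of "Collect _"]
  using assms by (fastforce simp: eventually_nhds)

lemma lower_semicontinuous_tendsto:
  assumes "lower_semicontinuous F" "X \<longlonglongrightarrow> y" "c < F y"
  shows "\<forall>\<^sub>F j in sequentially. c < F (X j)"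
  using topological_tendstoD[OF assms(2), of "{y. c < F y}"] assms(1,3)
  by (simp add: lower_semicontinuous_def)

lemma lower_semicontinuous_le_lim:
  fixes F :: "'a::topological_space \<Rightarrow> real"
  assumes "lower_semicontinuous F" "X \<longlonglongrightarrow> y" "\<And>j. F (X j) \<le> h j" "h \<longlonglongrightarrow> L"
  shows "F y \<le> L"
proof (rule ccontr)
  assume "\<not> F y \<le> L"
  then obtain c where "L < c" "c < F y" using dense not_le by blast
  have "\<forall>\<^sub>F j in sequentially. c < F (X j) \<and> h j < c"
    using lower_semicontinuous_tendsto[OF assms(1,2) \<open>c < F y\<close>] order_tendstoD(2)[OF assms(4) \<open>L < c\<close>]
    by (rule eventually_conj)
  then have "\<forall>\<^sub>F j in sequentially. False"
    by (rule eventually_mono) (use assms(3) in \<open>meson less_asym order_less_le_trans\<close>)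
  then show False by simp
qed

lemma lower_semicontinuous_continuous:
  fixes g :: "'a::topological_space \<Rightarrow> 'b::linorder_topology"
  assumes "continuous_on UNIV g"
  shows "lower_semicontinuous g"
  unfolding lower_semicontinuous_def using open_Collect_less[OF continuous_on_const assms] by blast

lemma lower_semicontinuous_compose:
  assumes "lower_semicontinuous F" "continuous_on UNIV h"
  shows "lower_semicontinuous (\<lambda>y. F (h y))"
  using open_vimage[of "{y. _ < F y}" h] assms by (simp add: lower_semicontinuous_def vimage_def)

lemma lower_semicontinuous_add:
  fixes F G :: "'a::topological_space \<Rightarrow> real"
  assumes "lower_semicontinuous F" "lower_semicontinuous G"
  shows "lower_semicontinuous (\<lambda>y. F y + G y)"
  unfolding lower_semicontinuous_def
proof
  fix c
  have "{y. c < F y + G y} = (\<Union>t. {y. t < F y} \<inter> {y. c - t < G y})"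
  proof safe
    fix y assume "c < F y + G y"
    then show "y \<in> (\<Union>t. {y. t < F y} \<inter> {y. c - t < G y})"
      by (intro UN_I[of "(F y + c - G y) / 2"]) (auto simp: field_simps)
  qed auto
  moreover have "open ({y. t < F y} \<inter> {y. c - t < G y})" for t
    using assms by (auto simp: lower_semicontinuous_def)
  ultimately show "open {y. c < F y + G y}" by (simp add: open_UN)
qed

lemma lower_semicontinuous_SUP:
  fixes F :: "'i \<Rightarrow> 'a::topological_space \<Rightarrow> 'b::complete_linorder"
  assumes "\<And>i. i \<in> I \<Longrightarrow> lower_semicontinuous (F i)"
  shows "lower_semicontinuous (\<lambda>y. SUP i\<in>I. F i y)"
  unfolding lower_semicontinuous_def
proof
  fix c
  have "{y. c < (SUP i\<in>I. F i y)} = (\<Union>i\<in>I. {y. c < F i y})"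
    by (auto simp: less_SUP_iff)
  then show "open {y. c < (SUP i\<in>I. F i y)}"
    using assms by (auto simp: lower_semicontinuous_def)
qed

lemma lower_semicontinuous_ereal:
  assumes "lower_semicontinuous \<phi>"
  shows "lower_semicontinuous (\<lambda>y. ereal (\<phi> y))"
  unfolding lower_semicontinuous_def
proof
  fix c :: ereal
  show "open {y. c < ereal (\<phi> y)}"
    using assms by (cases c) (simp_all add: lower_semicontinuous_def)
qed

lemma ereal_real_of_ereal_min:
  fixes t :: ereal
  assumes "0 \<le> t"
  shows "ereal (real_of_ereal (min t (ereal B))) = min t (ereal B)"
  using assms by (cases t) (auto simp: min_def)

lemma lower_semicontinuous_truncation:
  fixes N :: "'a::topological_space \<Rightarrow> ereal"
  assumes "\<And>y. 0 \<le> N y" "lower_semicontinuous N"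
  shows "lower_semicontinuous (\<lambda>y. real_of_ereal (min (N y) (ereal B)))"
  unfolding lower_semicontinuous_def
proof
  fix c
  have "c < real_of_ereal (min (N y) (ereal B)) \<longleftrightarrow> ereal c < min (N y) (ereal B)" for y
    using ereal_real_of_ereal_min[OF assms(1)] by (metis less_ereal.simps(1))
  then have "{y. c < real_of_ereal (min (N y) (ereal B))} = (if c < B then {y. ereal c < N y} else {})"
    by auto
  then show "open {y. c < real_of_ereal (min (N y) (ereal B))}"
    using assms(2) by (simp add: lower_semicontinuous_def)
qed

lemma lower_semicontinuous_attains_min:
  assumes "lower_semicontinuous F" "compact S" "{y. F y \<le> F a0} \<subseteq> S"
  shows "\<exists>a. \<forall>b. F a \<le> F b"
proof -
  define \<F> where "\<F> = (\<lambda>a. {y. F y \<le> F a}) ` S"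
  have closed: "closed T" if "T \<in> \<F>" for T
    using that assms(1) by (auto simp: \<F>_def lower_semicontinuous_def closed_def Compl_eq not_le)
  have fip: "S \<inter> \<Inter>\<F>' \<noteq> {}" if fin: "finite \<F>'" "\<F>' \<subseteq> \<F>" for \<F>'
  proof -
    obtain A where A: "A \<subseteq> S" "finite A" "\<F>' = (\<lambda>a. {y. F y \<le> F a}) ` A"
      using finite_subset_image[OF fin[unfolded \<F>_def]] by blast
    show ?thesis
    proof (cases "A = {}")
      case True
      then show ?thesis using A(3) assms(3) by auto
    next
      case False
      then have "Min (F ` A) \<in> F ` A" using A(2) by simp
      then obtain a where "a \<in> A" "F a = Min (F ` A)" by auto
      then have "a \<in> S \<inter> \<Inter>\<F>'" using A by auto
      then show ?thesis by blast
    qed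
  qed
  have "S \<inter> \<Inter>\<F> \<noteq> {}"
    using compact_imp_fip[OF assms(2) closed fip] by blast
  then obtain l where l: "l \<in> S" "\<And>a. a \<in> S \<Longrightarrow> F l \<le> F a"
    unfolding \<F>_def by blast
  have "a0 \<in> S" using assms(3) by auto
  have "F l \<le> F b" for b
  proof (cases "b \<in> S")
    case False
    then have "F a0 < F b" using assms(3) by (meson mem_Collect_eq not_le subsetD)
    then show ?thesis using l(2)[OF \<open>a0 \<in> S\<close>] by (meson less_imp_le order_le_less_trans)
  qed (use l in auto)
  then show ?thesis by blast
qed

section \<open>Proximal normals and limiting subgradients\<close>

definition proj_cone :: "'a::euclidean_space \<Rightarrow> 'a set \<Rightarrow> 'a set" where
  "proj_cone x S = cone_gen {x - z | z. z \<in> proj_set x S}"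

lemma basic_normal_coneI:
  assumes "xs \<longlonglongrightarrow> x" "vs \<longlonglongrightarrow> v" "\<And>j. vs j \<in> proj_cone (xs j) S"
  shows "v \<in> basic_normal_cone x S"
  using assms unfolding basic_normal_cone_def proj_cone_def by blast

lemma proj_coneI:
  assumes "z \<in> proj_set x S" "0 \<le> c" "v = c *\<^sub>R (x - z)"
  shows "v \<in> proj_cone x S"
  using assms unfolding proj_cone_def cone_gen_def by blast

lemma proj_set_memI:
  assumes "z \<in> S" "\<And>z'. z' \<in> S \<Longrightarrow> dist x z \<le> dist x z'"
  shows "z \<in> proj_set x S"
proof -
  have "infdist x S = dist x z"
  proof (rule antisym)
    show "infdist x S \<le> dist x z" using assms(1) by (rule infdist_le)
    have "S \<noteq> {}" using assms(1) by auto
    then show "dist x z \<le> infdist x S"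
      unfolding infdist_notempty[OF \<open>S \<noteq> {}\<close>] by (intro cINF_greatest) (use assms in auto)
  qed
  then show ?thesis using assms(1) by (simp add: proj_set_def)
qed

lemma power2_norm_diff_shift:
  fixes a a' b :: "'a::real_inner"
  shows "(norm (a' - b))^2 = (norm (a - b))^2 + 2 * ((a - b) \<bullet> (a' - a)) + (norm (a' - a))^2"
  by (simp add: power2_norm_eq_inner algebra_simps inner_commute)

lemma proximal_normal_in_proj_cone:
  fixes S :: "'a::euclidean_space set"
  assumes "p \<in> S" "0 < t" "2 * t * \<sigma> \<le> 1"
    and ineq: "\<And>z. z \<in> S \<Longrightarrow> \<zeta> \<bullet> (z - p) \<le> \<sigma> * (norm (z - p))^2"
  shows "\<zeta> \<in> proj_cone (p + t *\<^sub>R \<zeta>) S"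
proof (rule proj_coneI)
  let ?q = "p + t *\<^sub>R \<zeta>"
  have "dist ?q p \<le> dist ?q z" if "z \<in> S" for z
  proof -
    have "2 * t * (\<zeta> \<bullet> (z - p)) \<le> 2 * t * \<sigma> * (norm (z - p))^2"
      using mult_left_mono[OF ineq[OF that], of "2 * t"] assms(2) by simp
    also have "\<dots> \<le> (norm (z - p))^2"
      using mult_right_mono[OF assms(3), of "(norm (z - p))^2"] by simp
    finally have "(norm (t *\<^sub>R \<zeta>))^2 \<le> (norm (z - ?q))^2"
      using power2_norm_diff_shift[of z ?q p] by (simp add: inner_commute)
    then show ?thesis by (simp add: dist_norm norm_minus_commute power2_le_iff_abs_le)
  qed
  then show "p \<in> proj_set ?q S" by (intro proj_set_memI[OF assms(1)])
  show "\<zeta> = (1 / t) *\<^sub>R (?q - p)" using assms(2) by simp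
qed (use assms(2) in simp)

lemma proximal_subgradient_epi_in_proj_cone:
  fixes N :: "'a::euclidean_space \<Rightarrow> ereal"
  assumes "N y0 = ereal a" "0 \<le> \<sigma>" "0 < t" "2 * t * \<sigma> \<le> 1"
    and ineq: "\<And>y. ereal (a + v \<bullet> (y - y0) - \<sigma> * (norm (y - y0))^2) \<le> N y"
  shows "(v, -1) \<in> proj_cone ((y0, a) + t *\<^sub>R (v, -1)) (epi N)"
proof (rule proximal_normal_in_proj_cone)
  show "(y0, a) \<in> epi N" using assms(1) by (simp add: epi_def)
  show "(v, -1) \<bullet> (z - (y0, a)) \<le> \<sigma> * (norm (z - (y0, a)))^2" if "z \<in> epi N" for z
  proof -
    obtain y r where z: "z = (y, r)" by fastforce
    have "N y \<le> ereal r" using that z by (simp add: epi_def)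
    with ineq[of y] have "ereal (a + v \<bullet> (y - y0) - \<sigma> * (norm (y - y0))^2) \<le> ereal r"
      by (rule order_trans)
    then have "v \<bullet> (y - y0) - (r - a) \<le> \<sigma> * (norm (y - y0))^2" by simp
    also have "\<dots> \<le> \<sigma> * ((norm (y - y0))^2 + (r - a)^2)"
      using assms(2) by (intro mult_left_mono) auto
    finally show ?thesis by (simp add: z norm_Pair power2_eq_square)
  qed
qed (use assms in auto)

lemma proximal_subgradient_norm_le:
  fixes \<zeta> :: "'a::real_inner"
  assumes "0 < \<sigma>" "0 \<le> L"
    and ineq: "\<And>w'. g w + \<zeta> \<bullet> (w' - w) - \<sigma> * (norm (w' - w))^2 \<le> g w'"
    and lip: "\<And>w'. g w' - g w \<le> L * norm (w' - w)"
  shows "norm \<zeta> \<le> L"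
proof (rule ccontr)
  assume "\<not> norm \<zeta> \<le> L"
  define n where "n = norm \<zeta>"
  have nL: "L < n" using \<open>\<not> norm \<zeta> \<le> L\<close> by (simp add: n_def)
  then have npos: "n > 0" using assms(2) by simp
  \<comment> \<open>for small \<open>s\<close> the linear gain along \<open>\<zeta>\<close> beats both the quadratic loss and the Lipschitz bound\<close>
  define s where "s = (n - L) / (2 * \<sigma> * n)"
  have spos: "s > 0" using nL npos assms(1) by (simp add: s_def)
  have "g w + s * n^2 - \<sigma> * (s^2 * n^2) \<le> g (w + s *\<^sub>R \<zeta>)"
    using ineq[of "w + s *\<^sub>R \<zeta>"] spos
    by (simp add: n_def power2_norm_eq_inner power_mult_distrib)
  moreover have "g (w + s *\<^sub>R \<zeta>) - g w \<le> L * (s * n)"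
    using lip[of "w + s *\<^sub>R \<zeta>"] spos by (simp add: n_def)
  ultimately have "(s * n) * (n - \<sigma> * s * n - L) \<le> 0"
    by (simp add: algebra_simps power2_eq_square)
  then have "n - \<sigma> * s * n - L \<le> 0" using spos npos by (simp add: mult_le_0_iff)
  moreover have "2 * (\<sigma> * s * n) = n - L" using assms(1) npos by (simp add: s_def field_simps)
  ultimately show False using nL by linarith
qed

lemma proximal_subgradient_infdist_norm_le:
  assumes "0 < \<sigma>"
    and "\<And>w'. infdist w K + \<zeta> \<bullet> (w' - w) - \<sigma> * (norm (w' - w))^2 \<le> infdist w' K"
  shows "norm \<zeta> \<le> 1"
proof (rule proximal_subgradient_norm_le[OF assms(1) _ assms(2)])
  show "infdist w' K - infdist w K \<le> 1 * norm (w' - w)" for w'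
    using infdist_triangle[of w' K w] by (simp add: dist_norm)
qed simp

lemma eq_of_inner_ge_one:
  fixes \<zeta> e :: "'a::real_inner"
  assumes "norm \<zeta> \<le> 1" "norm e = 1" "1 \<le> \<zeta> \<bullet> e"
  shows "\<zeta> = e"
proof -
  have "(norm (\<zeta> - e))^2 = (norm \<zeta>)^2 - 2 * (\<zeta> \<bullet> e) + (norm e)^2"
    by (simp add: power2_norm_eq_inner algebra_simps inner_commute)
  also have "\<dots> \<le> 0"
    using assms power_le_one[OF norm_ge_zero assms(1), of 2] by simp
  finally show ?thesis by simp
qed

lemma proximal_subgradient_infdist_outside:
  fixes K :: "'a::euclidean_space set"
  assumes "closed K" "w \<notin> K" "0 < \<sigma>" "p \<in> proj_set w K"
    and prox: "\<And>w'. infdist w K + \<zeta> \<bullet> (w' - w) - \<sigma> * (norm (w' - w))^2 \<le> infdist w' K"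
  shows "\<zeta> = (w - p) /\<^sub>R infdist w K"
proof -
  define d where "d = infdist w K"
  have pK: "p \<in> K" and dp: "dist w p = d" using assms(4) by (auto simp: proj_set_def d_def)
  have dpos: "0 < d"
    using infdist_pos_not_in_closed[OF assms(1) _ assms(2)] pK by (auto simp: d_def)
  \<comment> \<open>moving from \<open>w\<close> towards \<open>p\<close> decreases the distance to \<open>K\<close> at unit rate\<close>
  have along_segment: "d - \<sigma> * s * d^2 \<le> \<zeta> \<bullet> (w - p)" if "0 < s" "s \<le> 1" for s
  proof -
    define w' where "w' = w + s *\<^sub>R (p - w)"
    have "w' - p = (1 - s) *\<^sub>R (w - p)" by (simp add: w'_def algebra_simps)
    then have "infdist w' K \<le> (1 - s) * d"
      using infdist_le[OF pK, of w'] that dp by (simp add: dist_norm)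
    moreover have "\<zeta> \<bullet> (w' - w) = - s * (\<zeta> \<bullet> (w - p))"
      by (simp add: w'_def algebra_simps)
    moreover have "(norm (w' - w))^2 = s^2 * d^2"
      using that dp by (simp add: w'_def dist_norm power_mult_distrib norm_minus_commute)
    ultimately have "s * (d - \<sigma> * s * d^2 - \<zeta> \<bullet> (w - p)) \<le> 0"
      using prox[of w'] by (simp add: d_def algebra_simps power2_eq_square)
    then show ?thesis using that by (simp add: mult_le_0_iff)
  qed
  have d_le: "d \<le> \<zeta> \<bullet> (w - p)"
  proof (rule LIMSEQ_le_const2)
    have "(\<lambda>j. d - \<sigma> * inverse (real (Suc j)) * d^2) \<longlonglongrightarrow> d - \<sigma> * 0 * d^2"
      by (intro tendsto_intros LIMSEQ_inverse_real_of_nat)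
    then show "(\<lambda>j. d - \<sigma> * inverse (real (Suc j)) * d^2) \<longlonglongrightarrow> d" by simp
    show "\<exists>N. \<forall>j\<ge>N. d - \<sigma> * inverse (real (Suc j)) * d^2 \<le> \<zeta> \<bullet> (w - p)"
      by (intro exI allI impI along_segment) (auto simp: field_simps)
  qed
  have "\<zeta> = (w - p) /\<^sub>R d"
  proof (rule eq_of_inner_ge_one)
    show "norm \<zeta> \<le> 1" using proximal_subgradient_infdist_norm_le[OF assms(3) prox] .
    show "norm ((w - p) /\<^sub>R d) = 1" using dp dpos by (simp add: dist_norm)
    have "1 \<le> (\<zeta> \<bullet> (w - p)) / d" using d_le dpos by simp
    then show "1 \<le> \<zeta> \<bullet> ((w - p) /\<^sub>R d)" by (simp add: divide_inverse_commute)
  qed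
  then show ?thesis by (simp add: d_def)
qed

lemma proximal_subgradient_infdist_in_proj_cone:
  fixes K :: "'a::euclidean_space set"
  assumes "closed K" "K \<noteq> {}" "0 < \<sigma>" "0 < \<tau>"
    and prox: "\<And>w'. infdist w K + \<zeta> \<bullet> (w' - w) - \<sigma> * (norm (w' - w))^2 \<le> infdist w' K"
  shows "\<exists>t. 0 \<le> t \<and> t \<le> \<tau> \<and> \<zeta> \<in> proj_cone (w + t *\<^sub>R \<zeta>) K"
proof (cases "w \<in> K")
  case True
  define t where "t = min \<tau> (1 / (2 * \<sigma>))"
  have t: "0 < t" "2 * t * \<sigma> \<le> 1" using assms(3,4) by (auto simp: t_def min_def field_simps)
  have "\<zeta> \<in> proj_cone (w + t *\<^sub>R \<zeta>) K"
  proof (rule proximal_normal_in_proj_cone[OF True t])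
    show "\<zeta> \<bullet> (z - w) \<le> \<sigma> * (norm (z - w))^2" if "z \<in> K" for z
      using prox[of z] True that by simp
  qed
  then show ?thesis using t(1) by (intro exI[of _ t]) (auto simp: t_def)
next
  case False
  obtain p where "p \<in> K" "infdist w K = dist w p"
    using infdist_attains_inf[OF assms(1,2)] by metis
  then have p: "p \<in> proj_set w K" by (simp add: proj_set_def)
  have eq: "\<zeta> = (1 / infdist w K) *\<^sub>R (w - p)"
    using proximal_subgradient_infdist_outside[OF assms(1) False assms(3) p prox]
    by (simp add: divide_inverse_commute)
  have "\<zeta> \<in> proj_cone w K" by (rule proj_coneI[OF p _ eq]) (simp add: infdist_nonneg)
  then show ?thesis using assms(4) by (intro exI[of _ 0]) auto
qed

lemma basic_subdiff_of_proximal_limit: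
  fixes N :: "'a::euclidean_space \<Rightarrow> ereal"
  assumes ys: "ys \<longlonglongrightarrow> y" and as: "as \<longlonglongrightarrow> a" and vs: "vs \<longlonglongrightarrow> v"
    and Ny: "N y = ereal a" and Nys: "\<And>j. N (ys j) = ereal (as j)" and \<sigma>: "\<And>j. 0 \<le> \<sigma> j"
    and prox: "\<And>j y'. ereal (as j + vs j \<bullet> (y' - ys j) - \<sigma> j * (norm (y' - ys j))^2) \<le> N y'"
  shows "v \<in> basic_subdiff N y"
proof -
  define t where "t j = inverse (2 * (\<sigma> j + real (Suc j)))" for j
  have t: "0 < t j" "2 * t j * \<sigma> j \<le> 1" "t j \<le> inverse (real (Suc j))" for j
    using \<sigma>[of j] by (auto simp: t_def field_simps)
  have "t \<longlonglongrightarrow> 0"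
  proof (rule tendsto_sandwich[OF _ _ tendsto_const LIMSEQ_inverse_real_of_nat])
    show "\<forall>\<^sub>F j in sequentially. 0 \<le> t j" using t(1) by (simp add: less_imp_le)
    show "\<forall>\<^sub>F j in sequentially. t j \<le> inverse (real (Suc j))" using t(3) by simp
  qed
  then have "(\<lambda>j. (ys j, as j) + t j *\<^sub>R (vs j, -1)) \<longlonglongrightarrow> (y, a) + 0 *\<^sub>R (v, -1)"
    by (intro tendsto_intros ys as vs)
  moreover have "(\<lambda>j. (vs j, -1)) \<longlonglongrightarrow> (v, -1)" by (intro tendsto_intros vs)
  moreover have "(vs j, -1) \<in> proj_cone ((ys j, as j) + t j *\<^sub>R (vs j, -1)) (epi N)" for j
    by (rule proximal_subgradient_epi_in_proj_cone[OF Nys \<sigma> t(1,2) prox])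
  ultimately have "(v, -1) \<in> basic_normal_cone (y, a) (epi N)"
    by (intro basic_normal_coneI) simp_all
  then show ?thesis using Ny by (simp add: basic_subdiff_def)
qed

lemma basic_normal_cone_of_proximal_limit:
  fixes K :: "'a::euclidean_space set"
  assumes K: "closed K" "K \<noteq> {}" and ws: "ws \<longlonglongrightarrow> y" and \<zeta>s: "\<zeta>s \<longlonglongrightarrow> \<zeta>" and \<sigma>: "\<And>j. 0 < \<sigma> j"
    and prox: "\<And>j w'. infdist (ws j) K + \<zeta>s j \<bullet> (w' - ws j) - \<sigma> j * (norm (w' - ws j))^2 \<le> infdist w' K"
  shows "\<zeta> \<in> basic_normal_cone y K"
proof -
  have unit: "norm (\<zeta>s j) \<le> 1" for j using proximal_subgradient_infdist_norm_le[OF \<sigma> prox] .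
  have "\<forall>j. \<exists>t. 0 \<le> t \<and> t \<le> inverse (real (Suc j)) \<and> \<zeta>s j \<in> proj_cone (ws j + t *\<^sub>R \<zeta>s j) K"
    using proximal_subgradient_infdist_in_proj_cone[OF K \<sigma> _ prox] by simp
  then obtain t where t: "\<And>j. 0 \<le> t j" "\<And>j. t j \<le> inverse (real (Suc j))"
    "\<And>j. \<zeta>s j \<in> proj_cone (ws j + t j *\<^sub>R \<zeta>s j) K" by metis
  have "(\<lambda>j. t j *\<^sub>R \<zeta>s j) \<longlonglongrightarrow> 0"
  proof (rule Lim_null_comparison[OF always_eventually LIMSEQ_inverse_real_of_nat], intro allI)
    fix j
    have "norm (t j *\<^sub>R \<zeta>s j) \<le> t j * 1" using mult_left_le[OF unit t(1)] t(1)[of j] by simp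
    then show "norm (t j *\<^sub>R \<zeta>s j) \<le> inverse (real (Suc j))" using t(2)[of j] by linarith
  qed
  from tendsto_add[OF ws this] have "(\<lambda>j. ws j + t j *\<^sub>R \<zeta>s j) \<longlonglongrightarrow> y" by simp
  then show ?thesis using \<zeta>s t(3) by (rule basic_normal_coneI)
qed

lemma proj_direction_of_proximal_limit:
  fixes K :: "'a::euclidean_space set"
  assumes K: "closed K" "K \<noteq> {}" and ws: "ws \<longlonglongrightarrow> y" and \<zeta>s: "\<zeta>s \<longlonglongrightarrow> \<zeta>" and \<sigma>: "\<And>j. 0 < \<sigma> j"
    and prox: "\<And>j w'. infdist (ws j) K + \<zeta>s j \<bullet> (w' - ws j) - \<sigma> j * (norm (w' - ws j))^2 \<le> infdist w' K"
    and "y \<notin> K"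
  shows "\<exists>z. \<zeta> = (y - z) /\<^sub>R infdist y K \<and> z \<in> proj_set y K"
proof -
  define d where "d = infdist y K"
  have dpos: "0 < d" using infdist_pos_not_in_closed[OF K \<open>y \<notin> K\<close>] by (simp add: d_def)
  have "\<forall>\<^sub>F j in sequentially. ws j \<notin> K"
    using topological_tendstoD[OF ws, of "- K"] K(1) \<open>y \<notin> K\<close> by (simp add: open_Compl)
  then have ev: "\<forall>\<^sub>F j in sequentially. ws j - infdist (ws j) K *\<^sub>R \<zeta>s j \<in> K \<and> \<zeta>s j \<in> sphere 0 1"
  proof (rule eventually_mono)
    fix j assume out: "ws j \<notin> K"
    obtain p where pK: "p \<in> K" and dp: "infdist (ws j) K = dist (ws j) p"
      using infdist_attains_inf[OF K] by metis
    then have "p \<in> proj_set (ws j) K" by (simp add: proj_set_def)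
    then have "\<zeta>s j = (ws j - p) /\<^sub>R infdist (ws j) K"
      by (rule proximal_subgradient_infdist_outside[OF K(1) out \<sigma> _ prox])
    moreover have "0 < infdist (ws j) K" using infdist_pos_not_in_closed[OF K out] .
    ultimately show "ws j - infdist (ws j) K *\<^sub>R \<zeta>s j \<in> K \<and> \<zeta>s j \<in> sphere 0 1"
      using pK dp by (simp add: dist_norm)
  qed
  have lim: "(\<lambda>j. ws j - infdist (ws j) K *\<^sub>R \<zeta>s j) \<longlonglongrightarrow> y - d *\<^sub>R \<zeta>"
    unfolding d_def by (intro tendsto_intros ws \<zeta>s)
  have pK: "y - d *\<^sub>R \<zeta> \<in> K"
    by (rule Lim_in_closed_set[OF K(1) _ _ lim]) (use eventually_mono[OF ev] in auto)
  have "\<zeta> \<in> sphere 0 1"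
    by (rule Lim_in_closed_set[OF closed_sphere _ _ \<zeta>s]) (use eventually_mono[OF ev] in auto)
  then have "y - d *\<^sub>R \<zeta> \<in> proj_set y K" using pK dpos by (simp add: proj_set_def d_def dist_norm)
  moreover have "\<zeta> = (y - (y - d *\<^sub>R \<zeta>)) /\<^sub>R infdist y K" using dpos by (simp add: d_def)
  ultimately show ?thesis by blast
qed

lemma trunc_normal_of_proximal_limit:
  fixes K :: "'a::euclidean_space set"
  assumes K: "closed K" "K \<noteq> {}" and ws: "ws \<longlonglongrightarrow> y" and \<zeta>s: "\<zeta>s \<longlonglongrightarrow> \<zeta>" and \<sigma>: "\<And>j. 0 < \<sigma> j"
    and prox: "\<And>j w'. infdist (ws j) K + \<zeta>s j \<bullet> (w' - ws j) - \<sigma> j * (norm (w' - ws j))^2 \<le> infdist w' K"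
  shows "\<zeta> \<in> trunc_normal y K"
proof (cases "y \<in> K")
  case True
  have "norm \<zeta> \<le> 1"
    using Lim_norm_ubound[OF _ \<zeta>s] proximal_subgradient_infdist_norm_le[OF \<sigma> prox] by simp
  then show ?thesis
    using True basic_normal_cone_of_proximal_limit[OF K ws \<zeta>s \<sigma> prox] by (simp add: trunc_normal_def)
next
  case False
  then show ?thesis
    using proj_direction_of_proximal_limit[OF K ws \<zeta>s \<sigma> prox False] by (simp add: trunc_normal_def)
qed

section \<open>A fuzzy sum rule by decoupled penalisation\<close>

lemma proximal_inequality_of_min_penalty:
  fixes a b :: "'a::real_inner"
  assumes "\<And>a'. F a + c * (norm (b - a))^2 \<le> F a' + c * (norm (b - a'))^2"
  shows "F a + ((2 * c) *\<^sub>R (b - a)) \<bullet> (a' - a) - c * (norm (a' - a))^2 \<le> F a'"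
  using assms[of a'] power2_norm_diff_shift[of a' b a]
  by (simp add: norm_minus_commute[of b] algebra_simps)

locale decoupled_minimization =
  fixes V :: "'a::euclidean_space \<Rightarrow> real" and K :: "'a set" and g :: real and x yb :: 'a
  assumes V_lsc: "lower_semicontinuous V" and V_nonneg: "\<And>y. 0 \<le> V y"
    and K_closed: "closed K" and K_ne: "K \<noteq> {}" and g_pos: "0 < g"
    and yb_min: "\<And>y. V yb + infdist yb K + g * norm (yb - x) \<le> V y + infdist y K + g * norm (y - x)"
begin

definition M :: real where
  "M = V yb + infdist yb K + g * norm (yb - x)"

text \<open>The term \<open>|y - yb|\<^sup>2\<close> makes \<open>yb\<close> the only possible limit of the minimisers.\<close>

definition penalized :: "nat \<Rightarrow> 'a \<times> 'a \<times> 'a \<Rightarrow> real" where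
  "penalized k = (\<lambda>(y, w, u). V y + infdist w K + g * norm (u - x)
     + real (Suc k) * ((norm (y - w))^2 + (norm (y - u))^2) + (norm (y - yb))^2)"

lemma penalized_simp [simp]:
  "penalized k (y, w, u) = V y + infdist w K + g * norm (u - x)
     + real (Suc k) * ((norm (y - w))^2 + (norm (y - u))^2) + (norm (y - yb))^2"
  by (simp add: penalized_def)

lemma M_nonneg: "0 \<le> M"
  using V_nonneg[of yb] g_pos by (simp add: M_def infdist_nonneg)

lemma penalized_le_M_imp:
  assumes "penalized k (y, w, u) \<le> M"
  shows "V y \<le> M - infdist w K - g * norm (u - x) - (norm (y - yb))^2"
    and "real (Suc k) * (norm (y - w))^2 \<le> M" and "real (Suc k) * (norm (y - u))^2 \<le> M"
    and "(norm (y - yb))^2 \<le> M"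
proof -
  have le: "V y + infdist w K + g * norm (u - x) + real (Suc k) * (norm (y - w))^2
      + real (Suc k) * (norm (y - u))^2 + (norm (y - yb))^2 \<le> M"
    using assms unfolding penalized_simp distrib_left by (simp only: add.assoc)
  have "0 \<le> real (Suc k) * (norm (y - w))^2" "0 \<le> real (Suc k) * (norm (y - u))^2"
    "0 \<le> infdist w K" "0 \<le> g * norm (u - x)" "0 \<le> V y" "0 \<le> (norm (y - yb))^2"
    using V_nonneg g_pos by (auto simp del: of_nat_Suc simp: infdist_nonneg)
  with le show "V y \<le> M - infdist w K - g * norm (u - x) - (norm (y - yb))^2"
    "real (Suc k) * (norm (y - w))^2 \<le> M" "real (Suc k) * (norm (y - u))^2 \<le> M"
    "(norm (y - yb))^2 \<le> M"
    by linarith+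
qed

lemma norm_le_sqrt_of_weighted_le:
  assumes "real (Suc k) * (norm z)^2 \<le> M"
  shows "norm z \<le> sqrt (M * inverse (real (Suc k)))" and "norm z \<le> sqrt M"
proof -
  show "norm z \<le> sqrt (M * inverse (real (Suc k)))"
    using assms by (intro real_le_rsqrt) (simp add: field_simps)
  have "(norm z)^2 \<le> real (Suc k) * (norm z)^2" by (simp add: algebra_simps)
  then show "norm z \<le> sqrt M" using assms by (intro real_le_rsqrt) linarith
qed

lemma lower_semicontinuous_penalized: "lower_semicontinuous (penalized k)"
proof -
  have "penalized k = (\<lambda>a. V (fst a) + (infdist (fst (snd a)) K + g * norm (snd (snd a) - x)
     + real (Suc k) * ((norm (fst a - fst (snd a)))^2 + (norm (fst a - snd (snd a)))^2)
     + (norm (fst a - yb))^2))" (is "_ = ?F")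
    by (auto simp: fun_eq_iff)
  moreover have "lower_semicontinuous ?F"
    by (intro lower_semicontinuous_add lower_semicontinuous_compose[OF V_lsc]
        lower_semicontinuous_continuous continuous_intros)
  ultimately show ?thesis by simp
qed

lemma penalized_has_min: "\<exists>a. \<forall>b. penalized k a \<le> penalized k b"
proof (rule lower_semicontinuous_attains_min[OF lower_semicontinuous_penalized])
  define R where "R = 2 * sqrt M"
  show "compact (cball yb R \<times> cball yb R \<times> cball yb R)" by (simp add: compact_Times)
  show "{a. penalized k a \<le> penalized k (yb, yb, yb)} \<subseteq> cball yb R \<times> cball yb R \<times> cball yb R"
  proof
    fix a assume "a \<in> {a. penalized k a \<le> penalized k (yb, yb, yb)}"
    moreover obtain y w u where a: "a = (y, w, u)" by (metis prod.collapse)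
    ultimately have le: "penalized k (y, w, u) \<le> M" by (simp add: M_def)
    have "norm (y - yb) \<le> sqrt M" using penalized_le_M_imp(4)[OF le] by (rule real_le_rsqrt)
    moreover have "norm (y - w) \<le> sqrt M"
      by (rule norm_le_sqrt_of_weighted_le(2)[OF penalized_le_M_imp(2)[OF le]])
    moreover have "norm (y - u) \<le> sqrt M"
      by (rule norm_le_sqrt_of_weighted_le(2)[OF penalized_le_M_imp(3)[OF le]])
    moreover have "norm (w - yb) \<le> norm (y - w) + norm (y - yb)"
      "norm (u - yb) \<le> norm (y - u) + norm (y - yb)"
      by (metis norm_diff_triangle_le norm_minus_commute order_refl)+
    ultimately show "a \<in> cball yb R \<times> cball yb R \<times> cball yb R"
      unfolding a mem_Times_iff fst_conv snd_conv mem_cball dist_norm R_def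
      using real_sqrt_ge_zero[OF M_nonneg] norm_minus_commute[of yb y]
        norm_minus_commute[of yb w] norm_minus_commute[of yb u] by linarith
  qed
qed

definition minimizer :: "nat \<Rightarrow> 'a \<times> 'a \<times> 'a" where
  "minimizer k = (SOME a. \<forall>b. penalized k a \<le> penalized k b)"

definition y_seq :: "nat \<Rightarrow> 'a" where "y_seq k = fst (minimizer k)"
definition w_seq :: "nat \<Rightarrow> 'a" where "w_seq k = fst (snd (minimizer k))"
definition u_seq :: "nat \<Rightarrow> 'a" where "u_seq k = snd (snd (minimizer k))"

lemma minimizer_le: "penalized k (y_seq k, w_seq k, u_seq k) \<le> penalized k b"
proof -
  have "\<forall>b. penalized k (minimizer k) \<le> penalized k b"
    unfolding minimizer_def by (rule someI_ex[OF penalized_has_min])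
  then show ?thesis by (simp only: y_seq_def w_seq_def u_seq_def prod.collapse)
qed

lemma minimizer_le_M: "penalized k (y_seq k, w_seq k, u_seq k) \<le> M"
  using minimizer_le[of k "(yb, yb, yb)"] by (simp add: M_def)

definition \<zeta>_seq :: "nat \<Rightarrow> 'a" where "\<zeta>_seq k = (2 * real (Suc k)) *\<^sub>R (y_seq k - w_seq k)"
definition \<eta>_seq :: "nat \<Rightarrow> 'a" where "\<eta>_seq k = (2 * real (Suc k)) *\<^sub>R (y_seq k - u_seq k)"

lemma proximal_ineq_V:
  "V (y_seq k) + (- \<zeta>_seq k - \<eta>_seq k - 2 *\<^sub>R (y_seq k - yb)) \<bullet> (y' - y_seq k)
     - (2 * real (Suc k) + 1) * (norm (y' - y_seq k))^2 \<le> V y'"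
proof -
  let ?y = "y_seq k" and ?w = "w_seq k" and ?u = "u_seq k" and ?c = "real (Suc k)"
  define d where "d = y' - ?y"
  have shift: "(norm (y' - b))^2 = (norm (?y - b))^2 + 2 * ((?y - b) \<bullet> d) + (norm d)^2" for b
    unfolding d_def by (rule power2_norm_diff_shift)
  have "V ?y + ?c * ((norm (?y - ?w))^2 + (norm (?y - ?u))^2) + (norm (?y - yb))^2
      \<le> V y' + ?c * ((norm (y' - ?w))^2 + (norm (y' - ?u))^2) + (norm (y' - yb))^2"
    using minimizer_le[of k "(y', ?w, ?u)"] by simp
  then have "V ?y - 2 * ?c * ((?y - ?w) \<bullet> d) - 2 * ?c * ((?y - ?u) \<bullet> d) - 2 * ((?y - yb) \<bullet> d)
      - (2 * ?c + 1) * (norm d)^2 \<le> V y'"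
    unfolding shift[of ?w] shift[of ?u] shift[of yb] by (simp add: algebra_simps)
  moreover have "(- \<zeta>_seq k - \<eta>_seq k - 2 *\<^sub>R (?y - yb)) \<bullet> d
      = - 2 * ?c * ((?y - ?w) \<bullet> d) - 2 * ?c * ((?y - ?u) \<bullet> d) - 2 * ((?y - yb) \<bullet> d)"
    by (simp add: \<zeta>_seq_def \<eta>_seq_def algebra_simps)
  ultimately show ?thesis unfolding d_def[symmetric] by linarith
qed

lemma proximal_ineq_infdist:
  "infdist (w_seq k) K + \<zeta>_seq k \<bullet> (w' - w_seq k) - real (Suc k) * (norm (w' - w_seq k))^2
     \<le> infdist w' K"
proof -
  have "infdist (w_seq k) K + real (Suc k) * (norm (y_seq k - w_seq k))^2
      \<le> infdist w' K + real (Suc k) * (norm (y_seq k - w'))^2" for w'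
    using minimizer_le[of k "(y_seq k, w', u_seq k)"] by (simp add: algebra_simps)
  then show ?thesis unfolding \<zeta>_seq_def by (rule proximal_inequality_of_min_penalty)
qed

lemma proximal_ineq_norm:
  "g * norm (u_seq k - x) + \<eta>_seq k \<bullet> (u' - u_seq k) - real (Suc k) * (norm (u' - u_seq k))^2
     \<le> g * norm (u' - x)"
proof -
  have "g * norm (u_seq k - x) + real (Suc k) * (norm (y_seq k - u_seq k))^2
      \<le> g * norm (u' - x) + real (Suc k) * (norm (y_seq k - u'))^2" for u'
    using minimizer_le[of k "(y_seq k, w_seq k, u')"] by (simp add: algebra_simps)
  then show ?thesis unfolding \<eta>_seq_def by (rule proximal_inequality_of_min_penalty)
qed

lemma norm_\<zeta>_seq_le: "norm (\<zeta>_seq k) \<le> 1"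
  by (rule proximal_subgradient_infdist_norm_le[OF _ proximal_ineq_infdist]) simp

lemma norm_\<eta>_seq_le: "norm (\<eta>_seq k) \<le> g"
proof (rule proximal_subgradient_norm_le[OF _ _ proximal_ineq_norm])
  show "g * norm (u' - x) - g * norm (u_seq k - x) \<le> g * norm (u' - u_seq k)" for u'
    using mult_left_mono[OF norm_triangle_ineq[of "u' - u_seq k" "u_seq k - x"]] g_pos
    by (simp add: algebra_simps)
qed (use g_pos in simp_all)

lemma penalty_gaps_tendsto_zero:
  "(\<lambda>k. y_seq k - w_seq k) \<longlonglongrightarrow> 0" "(\<lambda>k. y_seq k - u_seq k) \<longlonglongrightarrow> 0"
proof -
  have "(\<lambda>k. sqrt (M * inverse (real (Suc k)))) \<longlonglongrightarrow> sqrt (M * 0)"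
    by (intro tendsto_intros LIMSEQ_inverse_real_of_nat)
  then have lim: "(\<lambda>k. sqrt (M * inverse (real (Suc k)))) \<longlonglongrightarrow> 0" by simp
  show "(\<lambda>k. y_seq k - w_seq k) \<longlonglongrightarrow> 0" "(\<lambda>k. y_seq k - u_seq k) \<longlonglongrightarrow> 0"
    using norm_le_sqrt_of_weighted_le(1)[OF penalized_le_M_imp(2)[OF minimizer_le_M]]
      norm_le_sqrt_of_weighted_le(1)[OF penalized_le_M_imp(3)[OF minimizer_le_M]]
    by (auto intro!: Lim_null_comparison[OF always_eventually lim])
qed

lemma subsequence_limit:
  assumes r: "strict_mono r" and lim: "(\<lambda>j. y_seq (r j)) \<longlonglongrightarrow> l"
  shows "l = yb" and "(\<lambda>j. w_seq (r j)) \<longlonglongrightarrow> yb" and "(\<lambda>j. V (y_seq (r j))) \<longlonglongrightarrow> V yb"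
proof -
  have "(\<lambda>j. y_seq (r j) - w_seq (r j)) \<longlonglongrightarrow> 0" "(\<lambda>j. y_seq (r j) - u_seq (r j)) \<longlonglongrightarrow> 0"
    using LIMSEQ_subseq_LIMSEQ[OF penalty_gaps_tendsto_zero(1) r]
      LIMSEQ_subseq_LIMSEQ[OF penalty_gaps_tendsto_zero(2) r] by (simp_all add: comp_def)
  from tendsto_diff[OF lim this(1)] tendsto_diff[OF lim this(2)]
  have w: "(\<lambda>j. w_seq (r j)) \<longlonglongrightarrow> l" and u: "(\<lambda>j. u_seq (r j)) \<longlonglongrightarrow> l" by simp_all
  define H where "H z = M - infdist z K - g * norm (z - x) - (norm (z - yb))^2" for z
  have H: "(\<lambda>j. M - infdist (w_seq (r j)) K - g * norm (u_seq (r j) - x) - (norm (y_seq (r j) - yb))^2)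
      \<longlonglongrightarrow> H l"
    unfolding H_def by (intro tendsto_intros w u lim)
  have V_le: "V (y_seq (r j)) \<le> M - infdist (w_seq (r j)) K - g * norm (u_seq (r j) - x) - (norm (y_seq (r j) - yb))^2" for j
    by (rule penalized_le_M_imp(1)[OF minimizer_le_M])
  \<comment> \<open>lower semicontinuity and the minimality of \<open>yb\<close> squeeze the limit onto \<open>yb\<close>\<close>
  have "V l \<le> H l" by (rule lower_semicontinuous_le_lim[OF V_lsc lim V_le H])
  then have "(norm (l - yb))^2 \<le> 0" using yb_min[of l] unfolding H_def M_def by linarith
  then show "l = yb" by simp
  then show "(\<lambda>j. w_seq (r j)) \<longlonglongrightarrow> yb" using w by simp
  have "H yb = V yb" by (simp add: H_def M_def)
  show "(\<lambda>j. V (y_seq (r j))) \<longlonglongrightarrow> V yb"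
  proof (rule order_tendstoI)
    fix a assume "a < V yb"
    then show "\<forall>\<^sub>F j in sequentially. a < V (y_seq (r j))"
      using lower_semicontinuous_tendsto[OF V_lsc lim] \<open>l = yb\<close> by simp
  next
    fix a assume "V yb < a"
    then have "\<forall>\<^sub>F j in sequentially. M - infdist (w_seq (r j)) K - g * norm (u_seq (r j) - x)
        - (norm (y_seq (r j) - yb))^2 < a"
      using order_tendstoD(2)[OF H] \<open>l = yb\<close> \<open>H yb = V yb\<close> by simp
    then show "\<forall>\<^sub>F j in sequentially. V (y_seq (r j)) < a"
      by (rule eventually_mono) (use V_le le_less_trans in blast)
  qed
qed

lemma convergent_subsequence:
  obtains r \<zeta> \<eta> where "strict_mono r" "(\<lambda>j. w_seq (r j)) \<longlonglongrightarrow> yb"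
    "(\<lambda>j. y_seq (r j)) \<longlonglongrightarrow> yb" "(\<lambda>j. V (y_seq (r j))) \<longlonglongrightarrow> V yb"
    "(\<lambda>j. \<zeta>_seq (r j)) \<longlonglongrightarrow> \<zeta>" "(\<lambda>j. \<eta>_seq (r j)) \<longlonglongrightarrow> \<eta>" "norm \<eta> \<le> g"
proof -
  define Q where "Q k = (y_seq k, \<zeta>_seq k, \<eta>_seq k)" for k
  define S where "S = cball yb (sqrt M) \<times> cball (0::'a) 1 \<times> cball (0::'a) g"
  have "Q k \<in> S" for k
  proof -
    have "norm (y_seq k - yb) \<le> sqrt M"
      using penalized_le_M_imp(4)[OF minimizer_le_M] by (rule real_le_rsqrt)
    then show ?thesis
      using norm_\<zeta>_seq_le[of k] norm_\<eta>_seq_le[of k]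
      by (simp add: Q_def S_def dist_norm norm_minus_commute)
  qed
  moreover have "compact S" by (simp add: S_def compact_Times)
  ultimately obtain q r where q: "q \<in> S" and r: "strict_mono r" and lim: "(Q \<circ> r) \<longlonglongrightarrow> q"
    using seq_compactE[OF compact_imp_seq_compact, of S Q] by blast
  obtain l \<zeta> \<eta> where q_eq: "q = (l, \<zeta>, \<eta>)" by (metis prod.collapse)
  have y: "(\<lambda>j. y_seq (r j)) \<longlonglongrightarrow> l" and \<zeta>: "(\<lambda>j. \<zeta>_seq (r j)) \<longlonglongrightarrow> \<zeta>"
    and \<eta>: "(\<lambda>j. \<eta>_seq (r j)) \<longlonglongrightarrow> \<eta>"
    using tendsto_fst[OF lim] tendsto_fst[OF tendsto_snd[OF lim]] tendsto_snd[OF tendsto_snd[OF lim]]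
    by (simp_all add: q_eq Q_def comp_def)
  show ?thesis
    using that[OF r subsequence_limit(2)[OF r y] _ subsequence_limit(3)[OF r y] \<zeta> \<eta>]
      subsequence_limit(1)[OF r y] y q by (simp add: q_eq S_def)
qed

lemma optimality_condition:
  fixes N :: "'a \<Rightarrow> ereal"
  assumes N_ge: "\<And>y. ereal (V y) \<le> N y" and N_eq: "\<And>y. V y < B \<Longrightarrow> N y = ereal (V y)"
    and "M < B"
  shows "\<exists>v \<zeta>. v \<in> basic_subdiff N yb \<and> \<zeta> \<in> trunc_normal yb K \<and> norm (v + \<zeta>) \<le> g"
proof -
  obtain r \<zeta> \<eta> where r: "strict_mono r" and w: "(\<lambda>j. w_seq (r j)) \<longlonglongrightarrow> yb"
    and y: "(\<lambda>j. y_seq (r j)) \<longlonglongrightarrow> yb" and V: "(\<lambda>j. V (y_seq (r j))) \<longlonglongrightarrow> V yb"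
    and \<zeta>: "(\<lambda>j. \<zeta>_seq (r j)) \<longlonglongrightarrow> \<zeta>" and \<eta>: "(\<lambda>j. \<eta>_seq (r j)) \<longlonglongrightarrow> \<eta>" and "norm \<eta> \<le> g"
    by (rule convergent_subsequence)
  have "V (y_seq k) < B" for k
  proof -
    have "0 \<le> infdist (w_seq k) K" "0 \<le> g * norm (u_seq k - x)" "0 \<le> (norm (y_seq k - yb))^2"
      using g_pos by (simp_all add: infdist_nonneg)
    then show ?thesis using penalized_le_M_imp(1)[OF minimizer_le_M, of k] \<open>M < B\<close> by linarith
  qed
  moreover have "V yb < B"
  proof -
    have "0 \<le> infdist yb K" "0 \<le> g * norm (yb - x)" using g_pos by (simp_all add: infdist_nonneg)
    then show ?thesis using \<open>M < B\<close> unfolding M_def by linarith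
  qed
  ultimately have N_y: "\<And>j. N (y_seq (r j)) = ereal (V (y_seq (r j)))" and "N yb = ereal (V yb)"
    using N_eq by blast+
  have "(\<lambda>j. - \<zeta>_seq (r j) - \<eta>_seq (r j) - 2 *\<^sub>R (y_seq (r j) - yb)) \<longlonglongrightarrow> - \<zeta> - \<eta> - 2 *\<^sub>R (yb - yb)"
    by (intro tendsto_intros \<zeta> \<eta> y)
  then have "- \<zeta> - \<eta> \<in> basic_subdiff N yb"
  proof (intro basic_subdiff_of_proximal_limit[OF y V _ \<open>N yb = _\<close> N_y])
    show "ereal (V (y_seq (r j)) + (- \<zeta>_seq (r j) - \<eta>_seq (r j) - 2 *\<^sub>R (y_seq (r j) - yb)) \<bullet> (y' - y_seq (r j))
        - (2 * real (Suc (r j)) + 1) * (norm (y' - y_seq (r j)))^2) \<le> N y'" for j y'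
      by (rule order_trans[OF _ N_ge]) (simp only: ereal_less_eq(3) proximal_ineq_V)
  qed simp_all
  moreover have "\<zeta> \<in> trunc_normal yb K"
    by (rule trunc_normal_of_proximal_limit[OF K_closed K_ne w \<zeta> _ proximal_ineq_infdist]) simp
  ultimately show ?thesis using \<open>norm \<eta> \<le> g\<close> by (intro exI[of _ "- \<zeta> - \<eta>"] exI[of _ \<zeta>]) simp
qed

end

section \<open>An error bound from a slope condition\<close>

lemma penalized_distance_attains_min:
  fixes V :: "'a::euclidean_space \<Rightarrow> real"
  assumes V_lsc: "lower_semicontinuous V" and V_nonneg: "\<And>y. 0 \<le> V y" and g: "0 < g"
  shows "\<exists>yb. \<forall>y. V yb + infdist yb K + g * norm (yb - x) \<le> V y + infdist y K + g * norm (y - x)"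
proof -
  define \<psi> where "\<psi> y = V y + infdist y K + g * norm (y - x)" for y
  have \<psi>_ge: "g * dist x y \<le> \<psi> y" for y
    using V_nonneg[of y] infdist_nonneg[of y K] by (simp add: \<psi>_def dist_norm norm_minus_commute)
  have "lower_semicontinuous \<psi>" unfolding \<psi>_def[abs_def]
    by (intro lower_semicontinuous_add V_lsc lower_semicontinuous_continuous continuous_intros)
  moreover have "{y. \<psi> y \<le> \<psi> x} \<subseteq> cball x (\<psi> x / g)"
  proof
    fix y assume "y \<in> {y. \<psi> y \<le> \<psi> x}"
    then have "g * dist x y \<le> \<psi> x" using \<psi>_ge[of y] by simp
    then show "y \<in> cball x (\<psi> x / g)" using g by (simp add: field_simps)
  qed
  ultimately show ?thesis
    using lower_semicontinuous_attains_min[OF _ compact_cball] unfolding \<psi>_def by blast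
qed

lemma slope_condition_imp_near_solution:
  fixes N :: "'a::euclidean_space \<Rightarrow> ereal"
  assumes K: "closed K" "K \<noteq> {}" and N_nonneg: "\<And>y. 0 \<le> N y" and N_lsc: "lower_semicontinuous N"
    and slope: "\<And>y. y \<notin> E \<Longrightarrow>
      {u + w | u w. u \<in> basic_subdiff N y \<and> w \<in> trunc_normal y K} \<inter> cball 0 \<gamma> = {}"
    and g: "0 < g" "g < \<gamma>" and Nx: "N x = ereal a"
  shows "\<exists>e\<in>E. g * dist x e \<le> a + infdist x K"
proof -
  define B where "B = a + infdist x K + 1"
  \<comment> \<open>truncating \<open>N\<close> above the level \<open>N x\<close> changes nothing on the sublevel set that matters\<close>
  define V where "V y = real_of_ereal (min (N y) (ereal B))" for y
  have V_ereal: "ereal (V y) = min (N y) (ereal B)" for y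
    unfolding V_def by (rule ereal_real_of_ereal_min[OF N_nonneg])
  have "0 \<le> a" using N_nonneg[of x] Nx by simp
  then have V_x: "V x = a" by (simp add: V_def Nx B_def infdist_nonneg)
  have V_nonneg: "0 \<le> V y" for y
  proof -
    have "0 \<le> ereal (V y)"
      unfolding V_ereal using N_nonneg[of y] \<open>0 \<le> a\<close> infdist_nonneg[of x K] by (simp add: B_def)
    then show ?thesis by simp
  qed
  have V_lsc: "lower_semicontinuous V"
    unfolding V_def[abs_def] by (rule lower_semicontinuous_truncation[OF N_nonneg N_lsc])
  obtain yb where yb: "\<And>y. V yb + infdist yb K + g * norm (yb - x) \<le> V y + infdist y K + g * norm (y - x)"
    using penalized_distance_attains_min[OF V_lsc V_nonneg g(1)] by blast
  show ?thesis
  proof (cases "yb \<in> E")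
    case True
    have "g * dist x yb \<le> V yb + infdist yb K + g * norm (yb - x)"
      using V_nonneg[of yb] infdist_nonneg[of yb K] by (simp add: dist_norm norm_minus_commute)
    also have "\<dots> \<le> a + infdist x K" using yb[of x] V_x by simp
    finally show ?thesis using True by blast
  next
    case False
    interpret decoupled_minimization V K g x yb
      by unfold_locales (use V_lsc V_nonneg K g yb in auto)
    have "M < B" using yb[of x] V_x by (simp add: M_def B_def)
    moreover have "ereal (V y) \<le> N y" for y using V_ereal by simp
    moreover have "N y = ereal (V y)" if "V y < B" for y
      using V_ereal[of y] that by (auto simp: min_def split: if_splits)
    ultimately obtain v \<zeta> where "v \<in> basic_subdiff N yb" "\<zeta> \<in> trunc_normal yb K" "norm (v + \<zeta>) \<le> g"
      using optimality_condition by blast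
    then have "v + \<zeta> \<in> {u + w | u w. u \<in> basic_subdiff N yb \<and> w \<in> trunc_normal yb K} \<inter> cball 0 \<gamma>"
      using g by auto
    with slope[OF False] show ?thesis by blast
  qed
qed

lemma error_bound_of_slope_condition:
  fixes N :: "'a::euclidean_space \<Rightarrow> ereal"
  assumes K: "closed K" "K \<noteq> {}" and N_nonneg: "\<And>y. 0 \<le> N y" and N_lsc: "lower_semicontinuous N"
    and slope: "\<And>y. y \<notin> E \<Longrightarrow>
      {u + w | u w. u \<in> basic_subdiff N y \<and> w \<in> trunc_normal y K} \<inter> cball 0 \<gamma> = {}"
    and \<gamma>: "0 < \<gamma>" and x0: "N x0 \<noteq> \<infinity>"
  shows "E \<noteq> {}" and "ereal (infdist x E) \<le> (N x + ereal (infdist x K)) / ereal \<gamma>"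
proof -
  note near = slope_condition_imp_near_solution[OF K N_nonneg N_lsc slope]
  obtain a0 where "N x0 = ereal a0" using x0 N_nonneg[of x0] by (cases "N x0") auto
  then show "E \<noteq> {}" using near[where g = "\<gamma> / 2" and x = x0 and a = a0] \<gamma> by auto
  show "ereal (infdist x E) \<le> (N x + ereal (infdist x K)) / ereal \<gamma>"
  proof (cases "N x")
    case (real a)
    have "\<gamma> * infdist x E \<le> a + infdist x K"
    proof (rule field_le_mult_one_interval)
      fix z :: real assume z: "0 < z" "z < 1"
      then obtain e where "e \<in> E" "(z * \<gamma>) * dist x e \<le> a + infdist x K"
        using near[where g = "z * \<gamma>" and x = x and a = a] \<gamma> real by auto
      moreover have "z * \<gamma> * infdist x E \<le> z * \<gamma> * dist x e"
        using infdist_le[OF \<open>e \<in> E\<close>] z \<gamma> by (intro mult_left_mono) auto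
      ultimately show "z * (\<gamma> * infdist x E) \<le> a + infdist x K" by (simp add: mult.assoc)
    qed
    then show ?thesis using \<gamma> real by (simp add: field_simps)
  qed (use \<gamma> N_nonneg[of x] in auto)
qed

section \<open>The gap function\<close>

lemma infdist_le_infdist_diff:
  fixes C :: "'a::real_normed_vector set"
  assumes add: "\<And>a b. a \<in> C \<Longrightarrow> b \<in> C \<Longrightarrow> a + b \<in> C" and "c \<in> C"
  shows "infdist v C \<le> infdist (v - c) C"
proof -
  have "C \<noteq> {}" using assms(2) by auto
  have "infdist v C \<le> dist (v - c) w" if "w \<in> C" for w
  proof -
    have "infdist v C \<le> dist v (c + w)" using add[OF assms(2) that] by (rule infdist_le)
    then show ?thesis by (simp add: dist_norm algebra_simps)
  qed
  then show ?thesis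
    unfolding infdist_notempty[OF \<open>C \<noteq> {}\<close>] by (intro cINF_greatest[OF \<open>C \<noteq> {}\<close>])
qed

lemma lower_semicontinuous_infdist_C_usc:
  fixes C :: "'c::real_normed_vector set" and h :: "'b::topological_space \<Rightarrow> 'c"
  assumes add: "\<And>a b. a \<in> C \<Longrightarrow> b \<in> C \<Longrightarrow> a + b \<in> C" and usc: "\<And>y. C_usc_at C h y"
  shows "lower_semicontinuous (\<lambda>y. infdist (h y) C)"
proof (rule lower_semicontinuousI)
  fix y c assume "c < infdist (h y) C"
  define e where "e = infdist (h y) C - c"
  have "0 < e" using \<open>c < infdist (h y) C\<close> by (simp add: e_def)
  then obtain U where U: "open U" "y \<in> U"
    and near: "\<And>z. z \<in> U \<Longrightarrow> h z \<in> {v - c' | v c'. v \<in> ball (h y) e \<and> c' \<in> C}"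
    using usc[of y] unfolding C_usc_at_def by (meson centre_in_ball open_ball)
  have "c < infdist (h z) C" if zU: "z \<in> U" for z
  proof -
    obtain v c' where "h z = v - c'" "dist (h y) v < e" "c' \<in> C" using near[OF zU] by auto
    moreover have "infdist (h y) C \<le> infdist v C + dist (h y) v" by (rule infdist_triangle)
    moreover have "infdist v C \<le> infdist (v - c') C" by (rule infdist_le_infdist_diff[OF add \<open>c' \<in> C\<close>])
    ultimately show ?thesis by (simp add: e_def)
  qed
  then show "\<forall>\<^sub>F z in nhds y. c < infdist (h z) C" using U by (auto simp: eventually_nhds)
qed

lemma lower_semicontinuous_gap_nu:
  assumes add: "\<And>a b. a \<in> C \<Longrightarrow> b \<in> C \<Longrightarrow> a + b \<in> C"
    and usc: "\<And>z x. z \<in> K \<xi> \<Longrightarrow> C_usc_at C (\<lambda>y. f \<xi> y z) x"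
  shows "lower_semicontinuous (gap_nu C K f \<xi>)"
  unfolding gap_nu_def[abs_def]
  by (intro lower_semicontinuous_SUP lower_semicontinuous_ereal
      lower_semicontinuous_infdist_C_usc[OF add usc])

lemma gap_nu_nonneg:
  assumes "K \<xi> \<noteq> {}"
  shows "0 \<le> gap_nu C K f \<xi> x"
proof -
  obtain z where "z \<in> K \<xi>" using assms by auto
  have "ereal 0 \<le> ereal (infdist (f \<xi> x z) C)" by (simp add: infdist_nonneg)
  also have "\<dots> \<le> gap_nu C K f \<xi> x" unfolding gap_nu_def using \<open>z \<in> K \<xi>\<close> by (rule SUP_upper)
  finally show ?thesis by (simp add: zero_ereal_def)
qed

lemma gap_nu_finite_of_C_bounded:
  assumes "0 \<in> C" "C_bounded C ((\<lambda>z. f \<xi> x0 z) ` K \<xi>)"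
  shows "gap_nu C K f \<xi> x0 \<noteq> \<infinity>"
proof -
  obtain R where R: "\<And>q. q \<in> (\<lambda>z. f \<xi> x0 z) ` K \<xi> - C \<Longrightarrow> norm q \<le> R"
    using assms(2) unfolding C_bounded_def bounded_iff by blast
  have bound: "ereal (infdist (f \<xi> x0 z) C) \<le> ereal (max 0 R)" if "z \<in> K \<xi>" for z
  proof (cases "f \<xi> x0 z \<in> C")
    case False
    have "infdist (f \<xi> x0 z) C \<le> dist (f \<xi> x0 z) 0" using assms(1) by (rule infdist_le)
    also have "\<dots> \<le> R" using R[of "f \<xi> x0 z"] False that by auto
    finally have "infdist (f \<xi> x0 z) C \<le> max 0 R" by simp
    then show ?thesis by (simp only: ereal_less_eq(3))
  qed simp
  have "gap_nu C K f \<xi> x0 \<le> ereal (max 0 R)"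
    unfolding gap_nu_def by (rule SUP_least) (rule bound)
  moreover have "ereal (max 0 R) < \<infinity>" by (simp only: less_ereal.simps(4))
  ultimately show ?thesis using le_less_trans less_imp_neq by blast
qed

theorem mainTheorem9:
  fixes C :: "'c::euclidean_space set"
    and K :: "'a::euclidean_space \<Rightarrow> 'b::euclidean_space set"
    and f :: "'a \<Rightarrow> 'b \<Rightarrow> 'b \<Rightarrow> 'c"
    and \<xi>bar \<xi> :: 'a and xbar :: 'b and \<rho> \<gamma> :: real
  assumes C_closed: "closed C" and C_convex: "convex C" and C_pointed: "pointed_cone C"
    and C_nontriv: "C \<noteq> {0}"
    and K_graph: "closed {(\<eta>, x). x \<in> K \<eta>}"
    and K_ne: "\<And>\<eta>. K \<eta> \<noteq> {}"
    and gph: "xbar \<in> VEP_sol C K f \<xi>bar"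
    and rho: "\<rho> > 0"
    and xi: "\<xi> \<in> cball \<xi>bar \<rho>"
    and usc: "\<And>z x. z \<in> K \<xi> \<Longrightarrow> C_usc_at C (\<lambda>y. f \<xi> y z) x"
    and x0: "\<exists>x0 \<in> K \<xi>. C_bounded C ((\<lambda>z. f \<xi> x0 z) ` K \<xi>)"
    and gamma_pos: "\<gamma> > 0"
    and gamma: "\<And>x. x \<notin> VEP_sol C K f \<xi> \<Longrightarrow>
         {u + w | u w. u \<in> basic_subdiff (gap_nu C K f \<xi>) x \<and> w \<in> trunc_normal x (K \<xi>)}
           \<inter> cball 0 \<gamma> = {}"
  shows "VEP_sol C K f \<xi> \<noteq> {} \<and>
         (\<forall>x. ereal (infdist x (VEP_sol C K f \<xi>)) \<le> gap_m C K f \<xi> x / ereal \<gamma>)"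
proof -
  have "K \<xi> = (\<lambda>x. (\<xi>, x)) -` {(\<eta>, x). x \<in> K \<eta>}" by auto
  then have K_closed: "closed (K \<xi>)"
    using continuous_closed_vimage[OF K_graph, of "\<lambda>x. (\<xi>, x)"] by (simp add: continuous_intros)
  have "cone C" using C_pointed by (simp add: pointed_cone_def)
  then have C_add: "\<And>a b. a \<in> C \<Longrightarrow> b \<in> C \<Longrightarrow> a + b \<in> C" and "0 \<in> C"
    using C_convex C_pointed convex_cone by (auto simp: pointed_cone_def)
  obtain x0 where "x0 \<in> K \<xi>" "C_bounded C ((\<lambda>z. f \<xi> x0 z) ` K \<xi>)" using x0 by blast
  then have x0_finite: "gap_nu C K f \<xi> x0 \<noteq> \<infinity>"
    using \<open>0 \<in> C\<close> by (intro gap_nu_finite_of_C_bounded)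
  have "0 \<le> gap_nu C K f \<xi> y" for y using K_ne by (rule gap_nu_nonneg)
  moreover have "lower_semicontinuous (gap_nu C K f \<xi>)"
    using C_add usc by (rule lower_semicontinuous_gap_nu)
  ultimately show ?thesis
    using error_bound_of_slope_condition[OF K_closed K_ne _ _ gamma gamma_pos x0_finite]
    by (simp add: gap_m_def gap_mu_def)
qed

end
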